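(* Let $(k,\nu)$ be a valued field with value group contained in $\mathbb{Z}$, let $V$ be a $k$-vector space of finite dimension $r$ with a value function $\operatorname{val}\colon V\to\mathbb{Z}\cup\{\infty\}$, and let $x\in k$ with $\nu(x)=1$. Consider the following procedure, applied to a $k$-basis $B_1,\dots,B_r$ of $V$: for $d=1,\dots,r$ in turn, first replace $B_d$ by $x^{-\operatorname{val}(B_d)}B_d$; then, as long as there exist $\alpha_1,\dots,\alpha_{d-1}\in k$ with $\operatorname{val}(\alpha_1B_1+\cdots+\alpha_{d-1}B_{d-1}+B_d)>0$, choose such $\alpha_1,\dots,\alpha_{d-1}$ and replace $B_d$ by $x^{-1}(\alpha_1B_1+\cdots+\alpha_{d-1}B_{d-1}+B_d)$. Finally return $B_1,\dots,B_r$. Then the procedure is correct: whenever it terminates, the returned elements $B_1,\dots,B_r$ form a $k$-basis of $V$ which is also an $\mathcal{O}_{(k,\nu)}$-module basis of the module $\mathcal{O}_{(V,\operatorname{val})}$ of integral elements of $V$ (i.e. a local integral basis of $V$ with respect to $\operatorname{val}$).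
   Context: A valuation on a field $k$ (of characteristic zero) with values in $\mathbb{Z}\cup\{\infty\}$ is a map $\nu$ with $\nu(a)=\infty\iff a=0$, $\nu(ab)=\nu(a)+\nu(b)$, $\nu(a+b)\ge\min\{\nu(a),\nu(b)\}$; $\mathcal{O}_{(k,\nu)}=\{a\in k:\nu(a)\ge0\}$. A value function on a $k$-vector space $V$ is a map $\operatorname{val}\colon V\to\mathbb{Z}\cup\{\infty\}$ with $\operatorname{val}(v)=\infty\iff v=0$, $\operatorname{val}(av)=\nu(a)+\operatorname{val}(v)$ for $a\in k$, and $\operatorname{val}(v+w)\ge\min\{\operatorname{val}(v),\operatorname{val}(w)\}$. An element $v$ is integral if $\operatorname{val}(v)\ge0$, and $\mathcal{O}_{(V,\operatorname{val})}$ denotes the set of integral elements. *)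

theory Defs
  imports Complex_Main "HOL-Library.Extended"
begin

text \<open>Values in Z \<union> {\<infinity>} are modelled by int extended, with Pinf = \<infinity>; Minf is excluded.\<close>

definition valuation :: "('k::field_char_0 \<Rightarrow> int extended) \<Rightarrow> bool" where
  "valuation \<nu> \<longleftrightarrow>
     (\<forall>a. \<nu> a \<noteq> Minf) \<and> (\<forall>a. \<nu> a = Pinf \<longleftrightarrow> a = 0) \<and>
     (\<forall>a b. \<nu> (a * b) = \<nu> a + \<nu> b) \<and>
     (\<forall>a b. \<nu> (a + b) \<ge> min (\<nu> a) (\<nu> b))"

definition value_function ::
  "('k::field_char_0 \<Rightarrow> 'v::ab_group_add \<Rightarrow> 'v) \<Rightarrow> ('k \<Rightarrow> int extended) \<Rightarrow> ('v \<Rightarrow> int extended) \<Rightarrow> bool" where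
  "value_function scale \<nu> val \<longleftrightarrow>
     (\<forall>v. val v \<noteq> Minf) \<and> (\<forall>v. val v = Pinf \<longleftrightarrow> v = 0) \<and>
     (\<forall>a v. val (scale a v) = \<nu> a + val v) \<and>
     (\<forall>v w. val (v + w) \<ge> min (val v) (val w))"

definition lincomb :: "('k \<Rightarrow> 'v::comm_monoid_add \<Rightarrow> 'v) \<Rightarrow> (nat \<Rightarrow> 'k) \<Rightarrow> 'v list \<Rightarrow> nat \<Rightarrow> 'v" where
  "lincomb scale a B d = (\<Sum>i<d. scale (a i) (B ! i))"

definition is_k_basis :: "('k::field \<Rightarrow> 'v::ab_group_add \<Rightarrow> 'v) \<Rightarrow> 'v list \<Rightarrow> bool" where
  "is_k_basis scale B \<longleftrightarrow>
     (\<forall>a. lincomb scale a B (length B) = 0 \<longrightarrow> (\<forall>i<length B. a i = 0)) \<and>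
     (\<forall>v. \<exists>a. v = lincomb scale a B (length B))"

definition local_integral_basis ::
  "('k::field \<Rightarrow> 'v::ab_group_add \<Rightarrow> 'v) \<Rightarrow> ('k \<Rightarrow> int extended) \<Rightarrow> ('v \<Rightarrow> int extended) \<Rightarrow> 'v list \<Rightarrow> bool" where
  "local_integral_basis scale \<nu> val B \<longleftrightarrow>
     (\<forall>i<length B. val (B ! i) \<ge> 0) \<and>
     (\<forall>v. val v \<ge> 0 \<longrightarrow> (\<exists>a. (\<forall>i<length B. \<nu> (a i) \<ge> 0) \<and> v = lincomb scale a B (length B))) \<and>
     (\<forall>a. (\<forall>i<length B. \<nu> (a i) \<ge> 0) \<and> lincomb scale a B (length B) = 0 \<longrightarrow> (\<forall>i<length B. a i = 0))"

definition normalize :: "('k::field \<Rightarrow> 'v \<Rightarrow> 'v) \<Rightarrow> ('v \<Rightarrow> int extended) \<Rightarrow> 'k \<Rightarrow> 'v \<Rightarrow> 'v" where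
  "normalize scale val x v = (case val v of Fin n \<Rightarrow> scale (x powi (- n)) v | _ \<Rightarrow> v)"

text \<open>Inner loop at (0-based) position d; only terminating runs are derivable.
  reduce_loop scale val x d B B' : starting from B, the loop may end with B'.\<close>
inductive reduce_loop ::
  "('k::field \<Rightarrow> 'v::ab_group_add \<Rightarrow> 'v) \<Rightarrow> ('v \<Rightarrow> int extended) \<Rightarrow> 'k \<Rightarrow> nat \<Rightarrow> 'v list \<Rightarrow> 'v list \<Rightarrow> bool"
  for scale val x where
  stop: "\<not> (\<exists>\<alpha>. val (lincomb scale \<alpha> B d + B ! d) > 0) \<Longrightarrow> reduce_loop scale val x d B B"
| step: "val (lincomb scale \<alpha> B d + B ! d) > 0 \<Longrightarrow>
         reduce_loop scale val x d (B[d := scale (inverse x) (lincomb scale \<alpha> B d + B ! d)]) B' \<Longrightarrow>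
         reduce_loop scale val x d B B'"

inductive run_procedure ::
  "('k::field \<Rightarrow> 'v::ab_group_add \<Rightarrow> 'v) \<Rightarrow> ('v \<Rightarrow> int extended) \<Rightarrow> 'k \<Rightarrow> nat \<Rightarrow> 'v list \<Rightarrow> 'v list \<Rightarrow> bool"
  for scale val x where
  finish: "length B \<le> d \<Longrightarrow> run_procedure scale val x d B B"
| stage: "d < length B \<Longrightarrow>
          reduce_loop scale val x d (B[d := normalize scale val x (B ! d)]) B' \<Longrightarrow>
          run_procedure scale val x (Suc d) B' B'' \<Longrightarrow>
          run_procedure scale val x d B B''"

end

theory Submission imports Defs begin

text \<open>
  Each step of the procedure replaces B_d by a nonzero multiple of B_d plus a combination of
  B_1, ..., B_{d-1}, so the list stays a k-basis, and it keeps B_d integral. On termination every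
  B_d is integral and reduced: no combination a_1 B_1 + ... + a_{d-1} B_{d-1} + B_d has positive
  value. Given an integral v = a_1 B_1 + ... + a_r B_r, let d be the largest index with
  nu(a_d) < 0. The terms beyond d are integral, hence so is a_1 B_1 + ... + a_d B_d, and dividing
  it by a_d produces a combination of the reduced shape with positive value, a contradiction.
\<close>

definition reduced_at :: "('k \<Rightarrow> 'v::comm_monoid_add \<Rightarrow> 'v) \<Rightarrow> ('v \<Rightarrow> int extended) \<Rightarrow> 'v list \<Rightarrow> nat \<Rightarrow> bool"
  where "reduced_at scale val B d \<longleftrightarrow> \<not> (\<exists>\<alpha>. val (lincomb scale \<alpha> B d + B ! d) > 0)"

lemma reduced_at_cong:
  assumes "\<And>i. i \<le> d \<Longrightarrow> B' ! i = B ! i"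
  shows "reduced_at scale val B' d \<longleftrightarrow> reduced_at scale val B d"
proof -
  have "lincomb scale \<alpha> B' d = lincomb scale \<alpha> B d" for \<alpha>
    unfolding lincomb_def using assms by (intro sum.cong) auto
  then show ?thesis unfolding reduced_at_def using assms[of d] by simp
qed

lemma extended_add_nonneg:
  fixes p q :: "int extended"
  shows "0 \<le> p \<Longrightarrow> 0 \<le> q \<Longrightarrow> 0 \<le> p + q"
  by (cases p; cases q) (auto simp: zero_extended_def)

lemma extended_add_pos_nonneg:
  fixes p q :: "int extended"
  shows "0 < p \<Longrightarrow> 0 \<le> q \<Longrightarrow> 0 < p + q"
  by (cases p; cases q) (auto simp: zero_extended_def)

section \<open>Valuations\<close>

lemma valuation_Fin:
  assumes "valuation \<nu>" and "a \<noteq> 0"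
  obtains n where "\<nu> a = Fin n"
  using assms unfolding valuation_def by (cases "\<nu> a") auto

lemma valuation_mult: "valuation \<nu> \<Longrightarrow> \<nu> (a * b) = \<nu> a + \<nu> b"
  unfolding valuation_def by blast

lemma valuation_eq_Pinf_iff: "valuation \<nu> \<Longrightarrow> \<nu> a = Pinf \<longleftrightarrow> a = 0"
  unfolding valuation_def by blast

lemma valuation_eq_one_imp_nonzero: "valuation \<nu> \<Longrightarrow> \<nu> x = 1 \<Longrightarrow> x \<noteq> 0"
  unfolding valuation_def by (metis extended.distinct(1) one_extended_def)

lemma valuation_one:
  assumes "valuation \<nu>"
  shows "\<nu> 1 = 0"
proof -
  obtain n where n: "\<nu> 1 = Fin n" using assms one_neq_zero by (rule valuation_Fin)
  have "\<nu> 1 = \<nu> 1 + \<nu> 1" using valuation_mult[OF assms, of 1 1] by simp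
  then show ?thesis using n by (simp add: zero_extended_def)
qed

lemma valuation_minus_one:
  assumes "valuation \<nu>"
  shows "\<nu> (- 1) = 0"
proof -
  obtain n where n: "\<nu> (- 1) = Fin n" using valuation_Fin[OF assms, of "- 1"] by auto
  have "\<nu> 1 = \<nu> (- 1) + \<nu> (- 1)" using valuation_mult[OF assms, of "- 1" "- 1"] by simp
  then show ?thesis using n valuation_one[OF assms] by (simp add: zero_extended_def)
qed

lemma valuation_inverse:
  assumes "valuation \<nu>" and "a \<noteq> 0"
  shows "\<nu> (inverse a) = - \<nu> a"
proof -
  obtain n where n: "\<nu> a = Fin n" using assms by (rule valuation_Fin)
  obtain m where m: "\<nu> (inverse a) = Fin m" using valuation_Fin[OF assms(1), of "inverse a"] assms(2) by auto
  have "\<nu> 1 = \<nu> a + \<nu> (inverse a)" using valuation_mult[OF assms(1), of a "inverse a"] assms(2) by simp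
  then show ?thesis using n m valuation_one[OF assms(1)] by (simp add: zero_extended_def)
qed

lemma valuation_power:
  assumes "valuation \<nu>" and "\<nu> x = 1"
  shows "\<nu> (x ^ n) = Fin (int n)"
proof (induction n)
  case 0
  then show ?case using valuation_one[OF assms(1)] by (simp add: zero_extended_def)
next
  case (Suc n)
  then show ?case using valuation_mult[OF assms(1), of x "x ^ n"] assms(2) by (simp add: one_extended_def)
qed

lemma valuation_power_int:
  assumes "valuation \<nu>" and "\<nu> x = 1"
  shows "\<nu> (x powi k) = Fin k"
proof (cases "k \<ge> 0")
  case True
  then show ?thesis using valuation_power[OF assms, of "nat k"] by (simp add: power_int_def)
next
  case False
  have "x \<noteq> 0" using valuation_eq_one_imp_nonzero[OF assms] .
  then have "\<nu> (inverse (x ^ nat (- k))) = Fin k"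
    using valuation_inverse[OF assms(1)] valuation_power[OF assms] False by simp
  then show ?thesis using False by (simp add: power_int_def power_inverse)
qed

section \<open>Linear algebra of lists of vectors\<close>

context vector_space
begin

lemma lincomb_update_triangular:
  assumes "d < length B"
  shows "lincomb scale a (B[d := scale c (lincomb scale \<alpha> B d + B ! d)]) (length B) =
         lincomb scale (\<lambda>i. if i < d then a i + a d * c * \<alpha> i else if i = d then a d * c else a i)
           B (length B)"
    (is "_ = lincomb scale ?T B _")
proof -
  let ?B' = "B[d := scale c (lincomb scale \<alpha> B d + B ! d)]"
  let ?L = "lincomb scale \<alpha> B d"
  let ?R = "{..<length B} - {d}"
  have d: "d \<in> {..<length B}" using assms by simp
  have "lincomb scale a ?B' (length B) = scale (a d) (?B' ! d) + (\<Sum>i\<in>?R. scale (a i) (?B' ! i))"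
    unfolding lincomb_def by (rule sum.remove[OF finite_lessThan d])
  also have "\<dots> = scale (a d * c) ?L + scale (a d * c) (B ! d) + (\<Sum>i\<in>?R. scale (a i) (B ! i))"
    using assms by (auto simp: scale_right_distrib intro!: sum.cong)
  finally have lhs: "lincomb scale a ?B' (length B) = \<dots>" .
  have "(\<Sum>i\<in>?R. scale (?T i) (B ! i)) =
        (\<Sum>i\<in>?R. scale (a i) (B ! i)) + (\<Sum>i\<in>?R. if i < d then scale (a d * c) (scale (\<alpha> i) (B ! i)) else 0)"
    by (subst sum.distrib[symmetric], intro sum.cong) (auto simp: scale_left_distrib)
  also have "(\<Sum>i\<in>?R. if i < d then scale (a d * c) (scale (\<alpha> i) (B ! i)) else 0) = scale (a d * c) ?L"
    using assms by (subst sum.inter_filter[symmetric]) (auto simp: lincomb_def scale_sum_right intro!: sum.cong)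
  finally have "(\<Sum>i\<in>?R. scale (?T i) (B ! i)) = (\<Sum>i\<in>?R. scale (a i) (B ! i)) + scale (a d * c) ?L" .
  moreover have "lincomb scale ?T B (length B) = scale (a d * c) (B ! d) + (\<Sum>i\<in>?R. scale (?T i) (B ! i))"
    unfolding lincomb_def by (subst sum.remove[OF finite_lessThan d]) simp
  ultimately show ?thesis using lhs by (simp add: algebra_simps)
qed

lemma is_k_basis_update_triangular:
  assumes "is_k_basis scale B" and "d < length B" and "c \<noteq> 0"
  shows "is_k_basis scale (B[d := scale c (lincomb scale \<alpha> B d + B ! d)])"
proof -
  let ?B' = "B[d := scale c (lincomb scale \<alpha> B d + B ! d)]"
  define T where "T a = (\<lambda>i. if i < d then a i + a d * c * \<alpha> i else if i = d then a d * c else a i)" for a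
  have T: "lincomb scale a ?B' (length B) = lincomb scale (T a) B (length B)" for a
    unfolding T_def using assms(2) by (rule lincomb_update_triangular)
  show ?thesis unfolding is_k_basis_def length_list_update
  proof (intro conjI allI impI)
    fix a i
    assume "lincomb scale a ?B' (length B) = 0" and i: "i < length B"
    then have Ta: "\<forall>j<length B. T a j = 0" using T assms(1) unfolding is_k_basis_def by metis
    then have "a d = 0" using assms(2,3) unfolding T_def by auto
    then show "a i = 0" using Ta i unfolding T_def by (auto split: if_splits)
  next
    fix v
    obtain b where b: "v = lincomb scale b B (length B)" using assms(1) unfolding is_k_basis_def by blast
    define a where "a = (\<lambda>i. if i < d then b i - b d * \<alpha> i else if i = d then b d / c else b i)"
    have "T a = b" unfolding T_def a_def using assms(3) by (auto simp: fun_eq_iff)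
    then show "\<exists>a. v = lincomb scale a ?B' (length B)" using b T by metis
  qed
qed

lemma is_k_basis_nth_nonzero:
  assumes "is_k_basis scale B" and "d < length B"
  shows "B ! d \<noteq> 0"
proof
  assume "B ! d = 0"
  then have "lincomb scale (\<lambda>i. if i = d then 1 else 0) B (length B) = 0"
    unfolding lincomb_def by (intro sum.neutral) auto
  then have "(\<lambda>i. if i = d then 1 else 0) d = (0::'a)"
    using assms unfolding is_k_basis_def by blast
  then show False by simp
qed

end

section \<open>Valued vector spaces\<close>

locale valued_vector_space = vector_space scale
  for scale :: "'k::field_char_0 \<Rightarrow> 'v::ab_group_add \<Rightarrow> 'v" +
  fixes \<nu> :: "'k \<Rightarrow> int extended" and val :: "'v \<Rightarrow> int extended"
  assumes valuation: "valuation \<nu>"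
    and value_function: "value_function scale \<nu> val"
begin

lemma val_Fin:
  assumes "v \<noteq> 0"
  obtains n where "val v = Fin n"
  using value_function assms unfolding value_function_def by (cases "val v") auto

lemma val_zero: "val 0 = Pinf"
  using value_function unfolding value_function_def by blast

lemma val_scale: "val (scale a v) = \<nu> a + val v"
  using value_function unfolding value_function_def by blast

lemma val_add: "min (val v) (val w) \<le> val (v + w)"
  using value_function unfolding value_function_def by blast

lemma val_uminus: "val (- v) = val v"
proof (cases "v = 0")
  case False
  then obtain n where "val v = Fin n" by (rule val_Fin)
  then show ?thesis
    using val_scale[of "- 1" v] valuation_minus_one[OF valuation] by (simp add: zero_extended_def)
qed simp

lemma val_diff: "min (val v) (val w) \<le> val (v - w)"
  using val_add[of v "- w"] by (simp add: val_uminus)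

lemma val_scale_nonneg: "0 \<le> \<nu> a \<Longrightarrow> 0 \<le> val v \<Longrightarrow> 0 \<le> val (scale a v)"
  unfolding val_scale by (rule extended_add_nonneg)

lemma val_scale_pos: "0 < \<nu> a \<Longrightarrow> 0 \<le> val v \<Longrightarrow> 0 < val (scale a v)"
  unfolding val_scale by (rule extended_add_pos_nonneg)

lemma val_sum_nonneg:
  assumes "\<And>i. i \<in> A \<Longrightarrow> 0 \<le> val (f i)"
  shows "0 \<le> val (sum f A)"
  using assms
proof (induction A rule: infinite_finite_induct)
  case (insert a A)
  then have "0 \<le> min (val (f a)) (val (sum f A))" by simp
  also have "\<dots> \<le> val (f a + sum f A)" by (rule val_add)
  finally show ?case using insert.hyps by simp
qed (simp_all add: val_zero)

lemma val_normalize: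
  assumes "\<nu> x = 1" and "v \<noteq> 0"
  shows "val (normalize scale val x v) = 0"
proof -
  obtain n where n: "val v = Fin n" using assms(2) by (rule val_Fin)
  have "val (normalize scale val x v) = \<nu> (x powi (- n)) + val v"
    by (simp add: normalize_def n val_scale del: power_int_minus)
  also have "\<dots> = Fin (- n) + Fin n"
    unfolding n valuation_power_int[OF valuation assms(1)] ..
  finally show ?thesis by (simp add: zero_extended_def)
qed

lemma val_scale_inverse_uniformizer:
  assumes "\<nu> x = 1" and "0 < val u"
  shows "0 \<le> val (scale (inverse x) u)"
proof -
  have "x \<noteq> 0" using valuation_eq_one_imp_nonzero[OF valuation assms(1)] .
  then have "\<nu> (inverse x) = Fin (- 1)"
    using valuation_inverse[OF valuation] assms(1) by (simp add: one_extended_def)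
  then show ?thesis using assms(2) unfolding val_scale
    by (cases "val u") (auto simp: zero_extended_def)
qed

lemma coeff_integral_if_reduced_at:
  assumes "reduced_at scale val B d" and "0 \<le> val (lincomb scale a B (Suc d))"
  shows "0 \<le> \<nu> (a d)"
proof (rule ccontr)
  assume neg: "\<not> 0 \<le> \<nu> (a d)"
  then have ad: "a d \<noteq> 0" using valuation_eq_Pinf_iff[OF valuation] by force
  have "0 < \<nu> (inverse (a d))"
    using neg valuation_inverse[OF valuation ad] by (cases "\<nu> (a d)") (auto simp: zero_extended_def)
  then have "0 < val (scale (inverse (a d)) (lincomb scale a B (Suc d)))"
    using assms(2) by (rule val_scale_pos)
  moreover have "scale (inverse (a d)) (lincomb scale a B (Suc d)) =
                 lincomb scale (\<lambda>i. inverse (a d) * a i) B d + B ! d"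
    using ad by (simp add: lincomb_def scale_right_distrib scale_sum_right)
  ultimately show False using assms(1) unfolding reduced_at_def by metis
qed

lemma integral_coeffs_if_reduced:
  assumes reduced: "\<And>i. i < length B \<Longrightarrow> reduced_at scale val B i"
    and integral: "\<And>i. i < length B \<Longrightarrow> 0 \<le> val (B ! i)"
    and "0 \<le> val (lincomb scale a B (length B))"
  shows "\<forall>i<length B. 0 \<le> \<nu> (a i)"
proof (rule ccontr)
  assume "\<not> (\<forall>i<length B. 0 \<le> \<nu> (a i))"
  then have S: "finite {i. i < length B \<and> \<not> 0 \<le> \<nu> (a i)}" "{i. i < length B \<and> \<not> 0 \<le> \<nu> (a i)} \<noteq> {}"
    by auto
  define d where "d = Max {i. i < length B \<and> \<not> 0 \<le> \<nu> (a i)}"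
  have d: "d < length B" "\<not> 0 \<le> \<nu> (a d)" using Max_in[OF S] unfolding d_def by auto
  have above: "0 \<le> \<nu> (a i)" if "d < i" "i < length B" for i
  proof (rule ccontr)
    assume "\<not> 0 \<le> \<nu> (a i)"
    then have "i \<le> d" using Max_ge[OF S(1), of i] that(2) unfolding d_def by simp
    then show False using that(1) by simp
  qed
  define tail where "tail = (\<Sum>i\<in>{Suc d..<length B}. scale (a i) (B ! i))"
  have indices: "{..<length B} = {..<Suc d} \<union> {Suc d..<length B}" using d(1) by auto
  have "lincomb scale a B (length B) = lincomb scale a B (Suc d) + tail"
    unfolding lincomb_def tail_def indices by (rule sum.union_disjoint) auto
  then have head: "lincomb scale a B (Suc d) = lincomb scale a B (length B) - tail"
    by (simp add: eq_diff_eq)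
  have "0 \<le> val tail"
    unfolding tail_def by (intro val_sum_nonneg val_scale_nonneg above integral) auto
  then have "0 \<le> min (val (lincomb scale a B (length B))) (val tail)" using assms(3) by simp
  also have "\<dots> \<le> val (lincomb scale a B (Suc d))" unfolding head by (rule val_diff)
  finally have "0 \<le> val (lincomb scale a B (Suc d))" .
  then show False using coeff_integral_if_reduced_at[OF reduced[OF d(1)]] d(2) by blast
qed

lemma local_integral_basis_if_reduced:
  assumes "is_k_basis scale B"
    and "\<And>i. i < length B \<Longrightarrow> reduced_at scale val B i"
    and "\<And>i. i < length B \<Longrightarrow> 0 \<le> val (B ! i)"
  shows "local_integral_basis scale \<nu> val B"
  unfolding local_integral_basis_def
proof (intro conjI allI impI)
  fix v
  assume "0 \<le> val v"
  moreover obtain a where "v = lincomb scale a B (length B)"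
    using assms(1) unfolding is_k_basis_def by blast
  ultimately show "\<exists>a. (\<forall>i<length B. 0 \<le> \<nu> (a i)) \<and> v = lincomb scale a B (length B)"
    using integral_coeffs_if_reduced[OF assms(2,3)] by blast
qed (use assms in \<open>auto simp: is_k_basis_def\<close>)

section \<open>Invariants of the procedure\<close>

lemma reduce_loop_invariant:
  assumes "\<nu> x = 1"
  shows "reduce_loop scale val x d B B' \<Longrightarrow> d < length B \<Longrightarrow> 0 \<le> val (B ! d) \<Longrightarrow> is_k_basis scale B \<Longrightarrow>
    length B' = length B \<and> (\<forall>i. i \<noteq> d \<longrightarrow> B' ! i = B ! i) \<and>
    reduced_at scale val B' d \<and> 0 \<le> val (B' ! d) \<and> is_k_basis scale B'"
proof (induction rule: reduce_loop.induct)
  case (stop B)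
  then show ?case unfolding reduced_at_def by auto
next
  case (step \<alpha> B d B')
  have "x \<noteq> 0" using valuation_eq_one_imp_nonzero[OF valuation assms(1)] .
  with step.prems step.hyps(1) show ?case
    using step.IH val_scale_inverse_uniformizer[OF assms] is_k_basis_update_triangular by simp
qed

lemma run_procedure_invariant:
  assumes "\<nu> x = 1"
  shows "run_procedure scale val x d B B' \<Longrightarrow> is_k_basis scale B \<Longrightarrow>
    length B' = length B \<and> (\<forall>i<d. B' ! i = B ! i) \<and>
    (\<forall>i. d \<le> i \<and> i < length B \<longrightarrow> reduced_at scale val B' i \<and> 0 \<le> val (B' ! i)) \<and>
    is_k_basis scale B'"
proof (induction rule: run_procedure.induct)
  case (finish B d)
  then show ?case by auto
next
  case (stage d B B' B'')
  let ?B\<^sub>1 = "B[d := normalize scale val x (B ! d)]"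
  have "B ! d \<noteq> 0" using is_k_basis_nth_nonzero stage.prems stage.hyps(1) .
  then obtain n where n: "val (B ! d) = Fin n" by (rule val_Fin)
  have "x \<noteq> 0" using valuation_eq_one_imp_nonzero[OF valuation assms(1)] .
  then have "is_k_basis scale (B[d := scale (x powi (- n)) (lincomb scale (\<lambda>_. 0) B d + B ! d)])"
    using stage.prems stage.hyps(1) by (intro is_k_basis_update_triangular) simp_all
  then have "is_k_basis scale ?B\<^sub>1"
    by (simp add: normalize_def n lincomb_def)
  moreover have "0 \<le> val (?B\<^sub>1 ! d)"
    using val_normalize[OF assms \<open>B ! d \<noteq> 0\<close>] stage.hyps(1) by simp
  ultimately have B': "length B' = length B" "\<And>i. i \<noteq> d \<Longrightarrow> B' ! i = B ! i"
    "reduced_at scale val B' d" "0 \<le> val (B' ! d)" "is_k_basis scale B'"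
    using reduce_loop_invariant[OF assms stage.hyps(2)] stage.hyps(1) by auto
  with stage.IH have B'': "length B'' = length B'" "\<And>i. i \<le> d \<Longrightarrow> B'' ! i = B' ! i"
    "\<forall>i. Suc d \<le> i \<and> i < length B' \<longrightarrow> reduced_at scale val B'' i \<and> 0 \<le> val (B'' ! i)"
    "is_k_basis scale B''"
    by auto
  have "reduced_at scale val B'' d" "0 \<le> val (B'' ! d)"
    using B'(3,4) B''(2) reduced_at_cong[of d B'' B'] by auto
  then have "reduced_at scale val B'' i \<and> 0 \<le> val (B'' ! i)" if "d \<le> i" "i < length B" for i
    using that B'(1) B''(3) by (cases "i = d") (auto simp: Suc_le_eq)
  then show ?case using B' B'' by auto
qed

end

theorem mainTheorem2:
  fixes \<nu> :: "'k::field_char_0 \<Rightarrow> int extended"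
    and scale :: "'k \<Rightarrow> 'v::ab_group_add \<Rightarrow> 'v"
    and val :: "'v \<Rightarrow> int extended"
    and x :: 'k and r :: nat and B B' :: "'v list"
  assumes "vector_space scale"
    and "valuation \<nu>"
    and "value_function scale \<nu> val"
    and "vector_space.dim scale (UNIV :: 'v set) = r"
    and "\<nu> x = 1"
    and "length B = r"
    and "is_k_basis scale B"
    and "run_procedure scale val x 0 B B'"
  shows "length B' = r \<and> is_k_basis scale B' \<and> local_integral_basis scale \<nu> val B'"
proof -
  interpret valued_vector_space scale \<nu> val
    using assms(1-3) by (simp add: valued_vector_space_def valued_vector_space_axioms_def)
  have "length B' = length B" and "is_k_basis scale B'"
    and "\<And>i. i < length B \<Longrightarrow> reduced_at scale val B' i \<and> 0 \<le> val (B' ! i)"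
    using run_procedure_invariant[OF assms(5,8,7)] by auto
  then show ?thesis using local_integral_basis_if_reduced assms(6) by simp
qed

end
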